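(* Let $N\ge2$, $d\ge1$, and let $x(t)$ be a (Carathéodory) solution of $$\dot x_i(t)=\frac{\lambda_i(x)}{N}\sum_{j=1}^N M_{ij}(t)\,\phi_{ij}(x_i,x_j)\,(x_j(t)-x_i(t)),\qquad i=1,\dots,N,$$ with $x_i\in\mathbb{R}^d$, where all $M_{ij}:[0,+\infty)\to[0,1]$ are Lebesgue measurable and $\lambda_i:\mathbb{R}^{Nd}\to\mathbb{R}^+$, $\phi_{ij}:\mathbb{R}^d\times\mathbb{R}^d\to\mathbb{R}^+$ are Lipschitz continuous and strictly positive. Fix $T,\mu>0$ and let $G(t)$ be the $(T,\mu)$-connectivity graph associated to the $M_{ij}$. Define $$\underline m:=\min\{\lambda_i(y)\phi_{ij}(y_i,y_j):\ i,j,\ y\in\mathbb{R}^{Nd},\ |y_k|\le\max_l|x_l(0)|\ \forall k\},$$ $$\overline m:=\max\{\lambda_i(y)\phi_{ij}(y_i,y_j):\ i,j,\ y\in\mathbb{R}^{Nd},\ |y_k|\le\max_l|x_l(0)|\ \forall k\}.$$ Then there exist Lebesgue integrable functions $\widetilde M_{ij}:[0,+\infty)\to[0,\overline m]$ such that $x(t)$ solves the linear system $$\dot x_i=\frac1N\sum_{j=1}^N\widetilde M_{ij}(t)(x_j-x_i),\qquad i=1,\dots,N,$$ and, for every $t\ge0$, the $(T,\underline m\mu)$-connectivity graph $\widetilde G(t)$ associated to the $\widetilde M_{ij}$ contains all arrows of $G(t)$.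
   Context: $|\cdot|$ is the Euclidean norm. Given $T,\mu>0$ and nonnegative measurable functions $M_{ij}$ on $[0,+\infty)$, the $(T,\mu)$-connectivity graph at time $t\ge0$ is the directed graph on nodes $\{1,\dots,N\}$ in which the arrow $i\to j$ exists iff $\frac1T\int_t^{t+T}M_{ij}(s)\,ds\ge\mu$. *)

theory Defs
  imports "HOL-Analysis.Analysis"
begin

text \<open>State of N agents in R^d: a vector of type real^'d^'n, agent i is y$i.\<close>

definition caratheodory_solution ::
  "(real \<Rightarrow> 'a::euclidean_space \<Rightarrow> 'a) \<Rightarrow> (real \<Rightarrow> 'a) \<Rightarrow> bool" where
  "caratheodory_solution F x \<longleftrightarrow>
     (\<forall>t\<ge>0. (\<lambda>s. F s (x s)) absolutely_integrable_on {0..t} \<and>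
             x t = x 0 + integral {0..t} (\<lambda>s. F s (x s)))"

definition conn_graph ::
  "real \<Rightarrow> real \<Rightarrow> ('n \<Rightarrow> 'n \<Rightarrow> real \<Rightarrow> real) \<Rightarrow> real \<Rightarrow> ('n \<times> 'n) set" where
  "conn_graph T \<mu> M t = {(i, j). (1 / T) * integral {t..t+T} (M i j) \<ge> \<mu>}"

definition nonlin_field ::
  "('n::finite \<Rightarrow> real^'d^'n \<Rightarrow> real) \<Rightarrow> ('n \<Rightarrow> 'n \<Rightarrow> real^'d \<Rightarrow> real^'d \<Rightarrow> real)
   \<Rightarrow> ('n \<Rightarrow> 'n \<Rightarrow> real \<Rightarrow> real) \<Rightarrow> real \<Rightarrow> real^'d^'n \<Rightarrow> real^'d^'n" where
  "nonlin_field lam phi M t y =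
     (\<chi> i. (lam i y / real CARD('n)) *\<^sub>R
           (\<Sum>j\<in>UNIV. (M i j t * phi i j (y$i) (y$j)) *\<^sub>R (y$j - y$i)))"

definition lin_field ::
  "('n::finite \<Rightarrow> 'n \<Rightarrow> real \<Rightarrow> real) \<Rightarrow> real \<Rightarrow> real^'d^'n \<Rightarrow> real^'d^'n" where
  "lin_field M t y =
     (\<chi> i. (1 / real CARD('n)) *\<^sub>R (\<Sum>j\<in>UNIV. M i j t *\<^sub>R (y$j - y$i)))"

definition weight_values ::
  "('n::finite \<Rightarrow> real^'d^'n \<Rightarrow> real) \<Rightarrow> ('n \<Rightarrow> 'n \<Rightarrow> real^'d \<Rightarrow> real^'d \<Rightarrow> real)
   \<Rightarrow> real \<Rightarrow> real set" where
  "weight_values lam phi R =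
     {lam i y * phi i j (y$i) (y$j) | i j y. \<forall>k. norm (y$k) \<le> R}"

end

theory Submission
  imports Defs
begin

(* Along the given solution, the rescaled weights
     M~_ij(t) = M_ij(t) lam_i(x(t)) phi_ij(x_i(t), x_j(t))
   turn the nonlinear system into the linear one.  For linear consensus dynamics with nonnegative,
   locally bounded weights, max_j v . x_j(t) is nonincreasing for every fixed vector v (a maximum
   principle, proved by discretising time); taking v = x_k(t) gives |x_k(t)| <= max_l |x_l(0)|.
   Hence the factors lam_i phi_ij along the solution take values in the compact set of their values
   on that box, between its infimum and supremum, which yields the bounds on M~ and, after
   integration over [t, t + T], the inclusion of the connectivity graphs. *)

lemma uniformly_continuous_on_finite_family:
  fixes p :: "'i::finite \<Rightarrow> real \<Rightarrow> real"
  assumes cont: "\<And>i. continuous_on {a..b} (p i)" and "0 < e"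
  shows "\<exists>\<delta>>0. \<forall>i. \<forall>s\<in>{a..b}. \<forall>s'\<in>{a..b}. \<bar>s' - s\<bar> < \<delta> \<longrightarrow> \<bar>p i s' - p i s\<bar> < e"
proof -
  have "\<exists>\<delta>>0. \<forall>s\<in>{a..b}. \<forall>s'\<in>{a..b}. dist s' s < \<delta> \<longrightarrow> dist (p i s') (p i s) < e" for i
    using compact_uniformly_continuous[OF cont compact_Icc] \<open>0 < e\<close>
    unfolding uniformly_continuous_on_def by blast
  then obtain \<delta> where "\<And>i. \<delta> i > 0 \<and> (\<forall>s\<in>{a..b}. \<forall>s'\<in>{a..b}. dist s' s < \<delta> i \<longrightarrow> dist (p i s') (p i s) < e)"
    by metis
  then show ?thesis
    by (intro exI[of _ "Min (range \<delta>)"]) (auto simp: dist_real_def)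
qed

lemma bdd_above_finite_family:
  fixes w :: "'i::finite \<Rightarrow> real \<Rightarrow> real"
  assumes "\<And>i. continuous_on {a..b} (w i)"
  shows "\<exists>C. \<forall>i. \<forall>s\<in>{a..b}. w i s \<le> C"
proof -
  have "compact (\<Union>i. w i ` {a..b})"
    using assms by (intro compact_UN compact_continuous_image compact_Icc) auto
  then obtain C where "\<forall>y\<in>(\<Union>i. w i ` {a..b}). y \<le> C"
    using bounded_imp_bdd_above[OF compact_imp_bounded] unfolding bdd_above_def by blast
  then show ?thesis by blast
qed

lemma le_increments_imp_le:
  fixes m :: "real \<Rightarrow> real"
  assumes "0 < h"
    and incr: "\<And>a. 0 \<le> a \<Longrightarrow> a + h \<le> real n * h \<Longrightarrow> m (a + h) \<le> m a + c * h"
  shows "m (real n * h) \<le> m 0 + c * (real n * h)"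
proof -
  have "m (real i * h) \<le> m 0 + c * (real i * h)" if "i \<le> n" for i
    using that
  proof (induction i)
    case 0
    then show ?case by simp
  next
    case (Suc i)
    have "real (Suc i) * h \<le> real n * h"
      using Suc.prems \<open>0 < h\<close> by (intro mult_right_mono) auto
    then have "real i * h + h \<le> real n * h"
      by (simp add: algebra_simps)
    then have "m (real i * h + h) \<le> m (real i * h) + c * h"
      using \<open>0 < h\<close> by (intro incr) auto
    then show ?case
      using Suc by (simp add: algebra_simps)
  qed
  then show ?thesis by simp
qed

(* step is the integrated form of the differential inequality p_k' <= C (max_j p_j - p_k). *)
context
  fixes p :: "'n::finite \<Rightarrow> real \<Rightarrow> real" and C t :: real
  assumes C: "0 \<le> C"
    and step: "\<And>k a b U L. 0 \<le> a \<Longrightarrow> a \<le> b \<Longrightarrow> b \<le> t \<Longrightarrow>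
      (\<And>j s. s \<in> {a..b} \<Longrightarrow> p j s \<le> U) \<Longrightarrow> (\<And>s. s \<in> {a..b} \<Longrightarrow> L \<le> p k s) \<Longrightarrow>
      p k b - p k a \<le> (b - a) * C * (U - L)"
begin

lemma Max_increment_le:
  assumes ab: "0 \<le> a" "a \<le> b" "b \<le> t" and short: "(b - a) * C \<le> 1"
    and osc: "\<And>j s. s \<in> {a..b} \<Longrightarrow> \<bar>p j s - p j a\<bar> < \<epsilon>"
  shows "Max (range (\<lambda>j. p j b)) \<le> Max (range (\<lambda>j. p j a)) + 2 * C * (b - a) * \<epsilon>"
proof -
  define m where "m = Max (range (\<lambda>j. p j a))"
  have p_le_m: "p j a \<le> m" for j
    unfolding m_def by (rule Max_ge) auto
  have "p k b \<le> m + 2 * C * (b - a) * \<epsilon>" for k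
  proof -
    have "p k b - p k a \<le> (b - a) * C * ((m + \<epsilon>) - (p k a - \<epsilon>))"
    proof (rule step[OF ab])
      show "p j s \<le> m + \<epsilon>" if "s \<in> {a..b}" for j s
        using osc[OF that, of j] p_le_m[of j] by linarith
      show "p k a - \<epsilon> \<le> p k s" if "s \<in> {a..b}" for s
        using osc[OF that, of k] by linarith
    qed
    moreover have "(b - a) * C * (m - p k a) \<le> 1 * (m - p k a)"
      using short p_le_m[of k] by (intro mult_right_mono) auto
    ultimately show ?thesis
      by (simp add: algebra_simps)
  qed
  moreover have "Max (range (\<lambda>j. p j b)) \<in> range (\<lambda>j. p j b)"
    by (rule Max_in) auto
  ultimately show ?thesis
    unfolding m_def by auto
qed

lemma Max_growth_le:
  assumes cont: "\<And>j. continuous_on {0..t} (p j)" and "0 \<le> t" and "0 < \<epsilon>"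
  shows "Max (range (\<lambda>j. p j t)) \<le> Max (range (\<lambda>j. p j 0)) + 2 * C * t * \<epsilon>"
proof -
  define m where "m s = Max (range (\<lambda>j. p j s))" for s
  obtain \<delta> where "0 < \<delta>"
    and \<delta>: "\<And>j s s'. s \<in> {0..t} \<Longrightarrow> s' \<in> {0..t} \<Longrightarrow> \<bar>s' - s\<bar> < \<delta> \<Longrightarrow> \<bar>p j s' - p j s\<bar> < \<epsilon>"
    using uniformly_continuous_on_finite_family[of 0 t p, OF cont \<open>0 < \<epsilon>\<close>] by blast
  obtain n :: nat where n: "t / \<delta> + t * C < real n"
    using reals_Archimedean2 by blast
  have "0 \<le> t / \<delta>" "0 \<le> t * C"
    using \<open>0 < \<delta>\<close> \<open>0 \<le> t\<close> C by auto
  then have "t / \<delta> < real n" "t * C \<le> real n" "0 < real n"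
    using n by linarith+
  define h where "h = t / real n"
  have t_eq: "t = real n * h"
    unfolding h_def using \<open>0 < real n\<close> by simp
  have "h < \<delta>" "h * C \<le> 1"
    using \<open>t / \<delta> < real n\<close> \<open>t * C \<le> real n\<close> \<open>0 < \<delta>\<close> \<open>0 < real n\<close>
    by (simp_all add: h_def field_simps)
  show ?thesis
  proof (cases "t = 0")
    case False
    then have "0 < h"
      unfolding h_def using \<open>0 \<le> t\<close> \<open>0 < real n\<close> by simp
    have "m (a + h) \<le> m a + 2 * C * \<epsilon> * h" if "0 \<le> a" "a + h \<le> real n * h" for a
      using Max_increment_le[of a "a + h" \<epsilon>] that \<open>0 < h\<close> \<open>h < \<delta>\<close> \<open>h * C \<le> 1\<close> \<delta> t_eq
      unfolding m_def by (simp add: algebra_simps)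
    from le_increments_imp_le[of h n m, OF \<open>0 < h\<close> this] show ?thesis
      unfolding m_def by (simp add: t_eq algebra_simps)
  qed simp
qed

lemma max_principle:
  assumes cont: "\<And>j. continuous_on {0..t} (p j)" and "0 \<le> t"
  shows "p k t \<le> Max (range (\<lambda>j. p j 0))"
proof -
  have "Max (range (\<lambda>j. p j t)) \<le> Max (range (\<lambda>j. p j 0))"
  proof (rule field_le_epsilon)
    fix e :: real assume "0 < e"
    have "0 < 2 * C * t + 1"
      using C \<open>0 \<le> t\<close> by (simp add: add_nonneg_pos)
    then have "0 < e / (2 * C * t + 1)" "2 * C * t * (e / (2 * C * t + 1)) \<le> e"
      using \<open>0 < e\<close> by (simp_all add: field_simps)
    then show "Max (range (\<lambda>j. p j t)) \<le> Max (range (\<lambda>j. p j 0)) + e"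
      using Max_growth_le[OF cont \<open>0 \<le> t\<close>, of "e / (2 * C * t + 1)"] by linarith
  qed
  moreover have "p k t \<le> Max (range (\<lambda>j. p j t))"
    by (rule Max_ge) auto
  ultimately show ?thesis
    by simp
qed

end

lemma caratheodory_solution_increment:
  assumes sol: "caratheodory_solution F x" and "0 \<le> a" "a \<le> b"
  shows "(\<lambda>s. F s (x s)) integrable_on {a..b}"
    and "x b - x a = integral {a..b} (\<lambda>s. F s (x s))"
proof -
  have sol_at: "(\<lambda>s. F s (x s)) integrable_on {0..t} \<and> x t = x 0 + integral {0..t} (\<lambda>s. F s (x s))"
    if "0 \<le> t" for t
    using sol that unfolding caratheodory_solution_def absolutely_integrable_on_def by blast
  have int_b: "(\<lambda>s. F s (x s)) integrable_on {0..b}"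
    using sol_at \<open>0 \<le> a\<close> \<open>a \<le> b\<close> by auto
  show "(\<lambda>s. F s (x s)) integrable_on {a..b}"
    using integrable_on_subinterval[OF int_b] \<open>0 \<le> a\<close> by auto
  show "x b - x a = integral {a..b} (\<lambda>s. F s (x s))"
  proof -
    have "x a = x 0 + integral {0..a} (\<lambda>s. F s (x s))" "x b = x 0 + integral {0..b} (\<lambda>s. F s (x s))"
      using sol_at[of a] sol_at[of b] \<open>0 \<le> a\<close> \<open>a \<le> b\<close> by auto
    then show ?thesis
      using Henstock_Kurzweil_Integration.integral_combine[OF \<open>0 \<le> a\<close> \<open>a \<le> b\<close> int_b]
      by (simp only:) (simp add: algebra_simps)
  qed
qed

lemma caratheodory_solution_continuous_on:
  assumes sol: "caratheodory_solution F x" and "0 \<le> t"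
  shows "continuous_on {0..t} x"
proof -
  have int: "(\<lambda>s. F s (x s)) integrable_on {0..t}"
    using caratheodory_solution_increment[OF sol order_refl \<open>0 \<le> t\<close>] by simp
  have "continuous_on {0..t} (\<lambda>s. x 0 + integral {0..s} (\<lambda>s. F s (x s)))"
    by (intro continuous_intros indefinite_integral_continuous_1 int)
  moreover have "x s = x 0 + integral {0..s} (\<lambda>s. F s (x s))" if "s \<in> {0..t}" for s
    using sol that unfolding caratheodory_solution_def atLeastAtMost_iff by blast
  ultimately show ?thesis
    by (metis (no_types, lifting) continuous_on_cong)
qed

lemma lin_field_inner_increment_le:
  fixes x :: "real \<Rightarrow> real^'d^'n::finite"
  assumes sol: "caratheodory_solution (lin_field A) x" and "0 \<le> a" "a \<le> b"
    and A: "\<And>i j s. s \<in> {a..b} \<Longrightarrow> 0 \<le> A i j s \<and> A i j s \<le> C"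
    and U: "\<And>j s. s \<in> {a..b} \<Longrightarrow> v \<bullet> (x s $ j) \<le> U"
    and L: "\<And>s. s \<in> {a..b} \<Longrightarrow> L \<le> v \<bullet> (x s $ k)"
  shows "v \<bullet> (x b $ k) - v \<bullet> (x a $ k) \<le> (b - a) * C * (U - L)"
proof -
  define f where "f s = lin_field A s (x s)" for s
  define proj where "proj y = v \<bullet> (y $ k)" for y :: "real^'d^'n"
  have proj: "bounded_linear proj"
    unfolding proj_def by (intro bounded_linear_intros bounded_linear_vec_nth)
  have f: "f integrable_on {a..b}" "x b - x a = integral {a..b} f"
    using caratheodory_solution_increment[OF sol \<open>0 \<le> a\<close> \<open>a \<le> b\<close>] unfolding f_def by auto
  have "v \<bullet> (x b $ k) - v \<bullet> (x a $ k) = proj (integral {a..b} f)"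
    unfolding proj_def f(2)[symmetric] by (simp add: inner_diff_right)
  also have "\<dots> = integral {a..b} (proj \<circ> f)"
    by (rule integral_linear[symmetric, OF f(1) proj])
  also have "\<dots> \<le> integral {a..b} (\<lambda>s. C * (U - L))"
  proof (rule integral_le)
    show "(proj \<circ> f) integrable_on {a..b}"
      by (rule integrable_linear[OF f(1) proj])
    fix s assume s: "s \<in> {a..b}"
    have "A k j s * (v \<bullet> (x s $ j) - v \<bullet> (x s $ k)) \<le> C * (U - L)" for j
    proof -
      have "0 \<le> U - L" "v \<bullet> (x s $ j) - v \<bullet> (x s $ k) \<le> U - L"
        using U[OF s, of j] U[OF s, of k] L[OF s] by linarith+
      then have "A k j s * (v \<bullet> (x s $ j) - v \<bullet> (x s $ k)) \<le> A k j s * (U - L)"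
        using A[OF s, of k j] by (intro mult_left_mono) auto
      also have "\<dots> \<le> C * (U - L)"
        using A[OF s, of k j] \<open>0 \<le> U - L\<close> by (intro mult_right_mono) auto
      finally show ?thesis .
    qed
    then have "(\<Sum>j\<in>UNIV. A k j s * (v \<bullet> (x s $ j) - v \<bullet> (x s $ k))) \<le> real CARD('n) * (C * (U - L))"
      by (intro sum_bounded_above[of UNIV, simplified])
    then show "(proj \<circ> f) s \<le> C * (U - L)"
      by (simp add: proj_def f_def lin_field_def inner_sum_right inner_diff_right field_simps)
  qed auto
  also have "\<dots> = (b - a) * C * (U - L)"
    using \<open>a \<le> b\<close> by simp
  finally show ?thesis .
qed

lemma lin_field_solution_norm_le:
  fixes x :: "real \<Rightarrow> real^'d^'n::finite"
  assumes sol: "caratheodory_solution (lin_field A) x" and "0 \<le> t"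
    and A: "\<And>i j s. s \<in> {0..t} \<Longrightarrow> 0 \<le> A i j s \<and> A i j s \<le> C"
  shows "norm (x t $ k) \<le> Max (range (\<lambda>l. norm (x 0 $ l)))"
proof -
  define v where "v = x t $ k"
  define R where "R = Max (range (\<lambda>l. norm (x 0 $ l)))"
  have "norm (x 0 $ l) \<le> R" for l
    unfolding R_def by (rule Max_ge) auto
  have "v \<bullet> (x t $ k) \<le> Max (range (\<lambda>j. v \<bullet> (x 0 $ j)))"
  proof (rule max_principle[of C t "\<lambda>j s. v \<bullet> (x s $ j)"])
    show "0 \<le> C"
      using A[of 0 k k] \<open>0 \<le> t\<close> by auto
    show "v \<bullet> (x b $ k) - v \<bullet> (x a $ k) \<le> (b - a) * C * (U - L)"
      if "0 \<le> a" "a \<le> b" "b \<le> t" "\<And>j s. s \<in> {a..b} \<Longrightarrow> v \<bullet> (x s $ j) \<le> U"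
        "\<And>s. s \<in> {a..b} \<Longrightarrow> L \<le> v \<bullet> (x s $ k)" for k a b U L
      using that A by (intro lin_field_inner_increment_le[OF sol]) auto
    show "continuous_on {0..t} (\<lambda>s. v \<bullet> (x s $ j))" for j
      by (intro continuous_intros caratheodory_solution_continuous_on[OF sol \<open>0 \<le> t\<close>])
  qed fact
  also have "Max (range (\<lambda>j. v \<bullet> (x 0 $ j))) \<in> range (\<lambda>j. v \<bullet> (x 0 $ j))"
    by (rule Max_in) auto
  then obtain j where "Max (range (\<lambda>j. v \<bullet> (x 0 $ j))) = v \<bullet> (x 0 $ j)"
    by blast
  also have "v \<bullet> (x 0 $ j) \<le> norm v * norm (x 0 $ j)"
    by (rule order_trans[OF abs_ge_self Cauchy_Schwarz_ineq2])
  also have "\<dots> \<le> norm v * R"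
    by (rule mult_left_mono) (simp_all add: \<open>norm (x 0 $ j) \<le> R\<close>)
  finally have "norm v * norm v \<le> norm v * R"
    by (simp add: dot_square_norm power2_eq_square v_def)
  moreover have "0 \<le> R"
    using \<open>norm (x 0 $ k) \<le> R\<close> norm_ge_zero order_trans by blast
  ultimately have "norm v \<le> R"
    by (cases "norm v = 0") (auto intro: mult_left_le_imp_le)
  then show ?thesis
    unfolding v_def R_def .
qed

definition weight ::
  "('n::finite \<Rightarrow> real^'d^'n \<Rightarrow> real) \<Rightarrow> ('n \<Rightarrow> 'n \<Rightarrow> real^'d \<Rightarrow> real^'d \<Rightarrow> real)
   \<Rightarrow> 'n \<Rightarrow> 'n \<Rightarrow> real^'d^'n \<Rightarrow> real" where
  "weight lam phi i j y = lam i y * phi i j (y $ i) (y $ j)"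

definition rescaled_weight ::
  "('n::finite \<Rightarrow> real^'d^'n \<Rightarrow> real) \<Rightarrow> ('n \<Rightarrow> 'n \<Rightarrow> real^'d \<Rightarrow> real^'d \<Rightarrow> real)
   \<Rightarrow> ('n \<Rightarrow> 'n \<Rightarrow> real \<Rightarrow> real) \<Rightarrow> (real \<Rightarrow> real^'d^'n) \<Rightarrow> 'n \<Rightarrow> 'n \<Rightarrow> real \<Rightarrow> real" where
  "rescaled_weight lam phi M x i j s = M i j s * weight lam phi i j (x s)"

lemma caratheodory_solution_lin_field_rescaled_weight:
  assumes "caratheodory_solution (nonlin_field lam phi M) x"
  shows "caratheodory_solution (lin_field (rescaled_weight lam phi M x)) x"
proof -
  have "lin_field (rescaled_weight lam phi M x) s (x s) = nonlin_field lam phi M s (x s)" for s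
    by (simp add: lin_field_def nonlin_field_def rescaled_weight_def weight_def scaleR_sum_right field_simps)
  then show ?thesis
    using assms unfolding caratheodory_solution_def by presburger
qed

lemma continuous_on_weight:
  fixes lam :: "'n::finite \<Rightarrow> real^'d^'n \<Rightarrow> real"
  assumes "continuous_on UNIV (lam i)" and "continuous_on UNIV (\<lambda>(a, b). phi i j a b)"
  shows "continuous_on UNIV (weight lam phi i j)"
proof -
  have "continuous_on UNIV (\<lambda>y::real^'d^'n. (\<lambda>(a, b). phi i j a b) (y $ i, y $ j))"
    by (rule continuous_on_compose2[OF assms(2)]) (intro continuous_intros, simp)
  then show ?thesis
    unfolding weight_def[abs_def] using assms(1) by (auto intro: continuous_intros)
qed

lemma compact_component_norm_le: "compact {y :: 'a::euclidean_space^'n. \<forall>k. norm (y $ k) \<le> R}"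
proof -
  have "norm y \<le> real CARD('n) * R" if "\<forall>k. norm (y $ k) \<le> R" for y :: "'a^'n"
  proof -
    have "norm y \<le> (\<Sum>k\<in>UNIV. norm (y $ k))"
      unfolding norm_vec_def by (rule L2_set_le_sum) simp
    also have "\<dots> \<le> real CARD('n) * R"
      using sum_bounded_above[of UNIV "\<lambda>k. norm (y $ k)" R] that by simp
    finally show ?thesis .
  qed
  then have "bounded {y :: 'a^'n. \<forall>k. norm (y $ k) \<le> R}"
    unfolding bounded_iff by blast
  moreover have "closed {y :: 'a^'n. \<forall>k. norm (y $ k) \<le> R}"
    by (intro closed_Collect_all closed_Collect_le continuous_intros)
  ultimately show ?thesis
    using compact_eq_bounded_closed by blast
qed

lemma weight_values_eq_UN:
  "weight_values lam phi R = (\<Union>(i, j). weight lam phi i j ` {y. \<forall>k. norm (y $ k) \<le> R})"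
  unfolding weight_values_def weight_def by blast

lemma compact_weight_values:
  assumes "\<And>i. continuous_on UNIV (lam i)" and "\<And>i j. continuous_on UNIV (\<lambda>(a, b). phi i j a b)"
  shows "compact (weight_values lam phi R)"
proof -
  have "compact (weight lam phi i j ` {y. \<forall>k. norm (y $ k) \<le> R})" for i j
    by (intro compact_continuous_image compact_component_norm_le
        continuous_on_subset[OF continuous_on_weight[OF assms]]) simp
  then show ?thesis
    unfolding weight_values_eq_UN by (intro compact_UN finite_UNIV) auto
qed

lemma conn_graph_subset_scaled:
  assumes "0 < T" "0 \<le> c"
    and M: "\<And>i j. M i j integrable_on {t..t+T}" and M': "\<And>i j. M' i j integrable_on {t..t+T}"
    and le: "\<And>i j s. s \<in> {t..t+T} \<Longrightarrow> c * M i j s \<le> M' i j s"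
  shows "conn_graph T \<mu> M t \<subseteq> conn_graph T (c * \<mu>) M' t"
proof (clarsimp simp: conn_graph_def)
  fix i j assume "\<mu> \<le> integral {t..t+T} (M i j) / T"
  then have "c * \<mu> \<le> c * integral {t..t+T} (M i j) / T"
    using \<open>0 \<le> c\<close> by (metis mult_left_mono times_divide_eq_right)
  also have "\<dots> \<le> integral {t..t+T} (M' i j) / T"
    using integral_le[OF integrable_on_mult_right[OF M] M' le] \<open>0 < T\<close>
    by (simp add: divide_right_mono)
  finally show "c * \<mu> \<le> integral {t..t+T} (M' i j) / T" .
qed

lemma measurable_times_continuous_absolutely_integrable_on:
  fixes f g :: "real \<Rightarrow> real"
  assumes f: "f \<in> borel_measurable (lebesgue_on {a..b})" and g: "continuous_on {a..b} g"
    and bound: "\<And>s. s \<in> {a..b} \<Longrightarrow> \<bar>f s * g s\<bar> \<le> B"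
  shows "(\<lambda>s. f s * g s) absolutely_integrable_on {a..b}"
proof (rule measurable_bounded_by_integrable_imp_absolutely_integrable)
  show "(\<lambda>s. f s * g s) \<in> borel_measurable (lebesgue_on {a..b})"
    by (intro borel_measurable_times f continuous_imp_measurable_on_sets_lebesgue g) simp
qed (use bound in auto)

locale weighted_consensus =
  fixes lam :: "'n::finite \<Rightarrow> real^'d^'n \<Rightarrow> real"
    and phi :: "'n \<Rightarrow> 'n \<Rightarrow> real^'d \<Rightarrow> real^'d \<Rightarrow> real"
    and M :: "'n \<Rightarrow> 'n \<Rightarrow> real \<Rightarrow> real"
    and x :: "real \<Rightarrow> real^'d^'n"
  assumes lam_cont: "\<And>i. continuous_on UNIV (lam i)" and lam_nonneg: "\<And>i y. 0 \<le> lam i y"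
    and phi_cont: "\<And>i j. continuous_on UNIV (\<lambda>(a, b). phi i j a b)"
    and phi_nonneg: "\<And>i j a b. 0 \<le> phi i j a b"
    and M_meas: "\<And>i j. M i j \<in> borel_measurable (lebesgue_on {0..})"
    and M_range: "\<And>i j t. 0 \<le> t \<Longrightarrow> M i j t \<in> {0..1}"
    and sol: "caratheodory_solution (nonlin_field lam phi M) x"
begin

(* Inf box_weights and Sup box_weights are the constants m_underline and m_overline. *)
abbreviation box_weights :: "real set" where
  "box_weights \<equiv> weight_values lam phi (Max (range (\<lambda>l. norm (x 0 $ l))))"

lemma continuous_on_weight_solution:
  assumes "0 \<le> a" "a \<le> b"
  shows "continuous_on {a..b} (\<lambda>s. weight lam phi i j (x s))"
proof -
  have "continuous_on {0..b} x"
    by (rule caratheodory_solution_continuous_on[OF sol]) (use assms in linarith)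
  then have "continuous_on {a..b} x"
    by (rule continuous_on_subset) (use assms in auto)
  then show ?thesis
    by (rule continuous_on_compose2[OF continuous_on_weight[OF lam_cont phi_cont]]) simp
qed

lemma weight_nonneg: "0 \<le> weight lam phi i j y"
  unfolding weight_def using lam_nonneg phi_nonneg by simp

lemma solution_component_norm_le:
  assumes "0 \<le> t"
  shows "norm (x t $ k) \<le> Max (range (\<lambda>l. norm (x 0 $ l)))"
proof -
  obtain C where C: "\<And>i j s. s \<in> {0..t} \<Longrightarrow> weight lam phi i j (x s) \<le> C"
    using bdd_above_finite_family[of 0 t "\<lambda>(i, j) s. weight lam phi i j (x s)"]
      continuous_on_weight_solution[OF order_refl assms] by fastforce
  show ?thesis
  proof (rule lin_field_solution_norm_le[OF caratheodory_solution_lin_field_rescaled_weight[OF sol] assms])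
    fix i j s assume s: "s \<in> {0..t}"
    have "0 \<le> M i j s" "M i j s \<le> 1"
      using M_range[of s i j] s by auto
    then show "0 \<le> rescaled_weight lam phi M x i j s \<and> rescaled_weight lam phi M x i j s \<le> C"
      using mult_left_le_one_le[of "weight lam phi i j (x s)" "M i j s"] C[OF s, of i j] weight_nonneg
      unfolding rescaled_weight_def by auto
  qed
qed

lemma weight_solution_mem_box_weights:
  assumes "0 \<le> s"
  shows "weight lam phi i j (x s) \<in> box_weights"
  using solution_component_norm_le[OF assms] unfolding weight_values_def weight_def by blast

lemma weight_solution_bounds:
  assumes "0 \<le> s"
  shows "Inf box_weights \<le> weight lam phi i j (x s)" "weight lam phi i j (x s) \<le> Sup box_weights"
proof -
  have "bounded box_weights"
    by (rule compact_imp_bounded[OF compact_weight_values[OF lam_cont phi_cont]])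
  then show "Inf box_weights \<le> weight lam phi i j (x s)" "weight lam phi i j (x s) \<le> Sup box_weights"
    using weight_solution_mem_box_weights[OF assms]
    by (auto intro: cInf_lower cSup_upper bounded_imp_bdd_above bounded_imp_bdd_below)
qed

lemma Inf_box_weights_nonneg: "0 \<le> Inf box_weights"
proof (rule cInf_greatest)
  show "box_weights \<noteq> {}"
    using weight_solution_mem_box_weights[of 0] by blast
  show "0 \<le> w" if "w \<in> box_weights" for w
    using that weight_nonneg unfolding weight_values_def weight_def by auto
qed

lemma rescaled_weight_range:
  assumes "0 \<le> s"
  shows "rescaled_weight lam phi M x i j s \<in> {0..Sup box_weights}"
  using M_range[OF assms, of i j] weight_solution_bounds[OF assms, of i j] weight_nonneg
    mult_left_le_one_le[of "weight lam phi i j (x s)" "M i j s"]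
  unfolding rescaled_weight_def by auto

lemma rescaled_weight_absolutely_integrable_on:
  assumes "0 \<le> a" "a \<le> b"
  shows "rescaled_weight lam phi M x i j absolutely_integrable_on {a..b}"
  unfolding rescaled_weight_def
proof (rule measurable_times_continuous_absolutely_integrable_on)
  show "M i j \<in> borel_measurable (lebesgue_on {a..b})"
    using measurable_restrict_mono[OF M_meas] assms by auto
  show "continuous_on {a..b} (\<lambda>s. weight lam phi i j (x s))"
    by (rule continuous_on_weight_solution[OF assms])
  show "\<bar>M i j s * weight lam phi i j (x s)\<bar> \<le> Sup box_weights" if "s \<in> {a..b}" for s
    using rescaled_weight_range[of s i j] that assms unfolding rescaled_weight_def by auto
qed

lemma conn_graph_subset_rescaled_weight:
  assumes "0 < T" "0 \<le> t"
  shows "conn_graph T \<mu> M t \<subseteq> conn_graph T (Inf box_weights * \<mu>) (rescaled_weight lam phi M x) t"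
proof (rule conn_graph_subset_scaled[OF \<open>0 < T\<close> Inf_box_weights_nonneg])
  have "M i j absolutely_integrable_on {t..t+T}" for i j
    by (rule measurable_bounded_by_integrable_imp_absolutely_integrable[where g = "\<lambda>_. 1"])
      (use measurable_restrict_mono[OF M_meas] M_range assms in auto)
  then show "M i j integrable_on {t..t+T}" for i j
    using absolutely_integrable_on_def by blast
  show "rescaled_weight lam phi M x i j integrable_on {t..t+T}" for i j
    using rescaled_weight_absolutely_integrable_on[of t "t+T" i j] assms
    by (simp add: absolutely_integrable_on_def)
  show "Inf box_weights * M i j s \<le> rescaled_weight lam phi M x i j s" if "s \<in> {t..t+T}" for i j s
    using mult_left_mono[of "Inf box_weights" "weight lam phi i j (x s)" "M i j s"]
      weight_solution_bounds[of s i j] M_range[of s i j] that assms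
    unfolding rescaled_weight_def by (simp add: mult.commute)
qed

end

theorem proposition2:
  fixes x :: "real \<Rightarrow> real^'d^'n::finite"
    and lam :: "'n \<Rightarrow> real^'d^'n \<Rightarrow> real"
    and phi :: "'n \<Rightarrow> 'n \<Rightarrow> real^'d \<Rightarrow> real^'d \<Rightarrow> real"
    and M :: "'n \<Rightarrow> 'n \<Rightarrow> real \<Rightarrow> real"
    and T \<mu> :: real
  assumes N2: "CARD('n) \<ge> 2"
    and M_meas: "\<And>i j. M i j \<in> borel_measurable (lebesgue_on {0..})"
    and M_range: "\<And>i j t. t \<ge> 0 \<Longrightarrow> M i j t \<in> {0..1}"
    and lam_lip: "\<And>i. \<exists>L. L-lipschitz_on UNIV (lam i)"
    and lam_pos: "\<And>i y. lam i y > 0"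
    and phi_lip: "\<And>i j. \<exists>L. L-lipschitz_on UNIV (\<lambda>(a, b). phi i j a b)"
    and phi_pos: "\<And>i j a b. phi i j a b > 0"
    and sol: "caratheodory_solution (nonlin_field lam phi M) x"
    and T_pos: "T > 0" and mu_pos: "\<mu> > 0"
  shows "\<exists>Mt :: 'n \<Rightarrow> 'n \<Rightarrow> real \<Rightarrow> real.
    (\<forall>i j. (\<forall>t\<ge>0. Mt i j absolutely_integrable_on {0..t}) \<and>
           (\<forall>t\<ge>0. Mt i j t \<in> {0..Sup (weight_values lam phi (Max (range (\<lambda>l. norm (x 0 $ l)))))})) \<and>
    caratheodory_solution (lin_field Mt) x \<and>
    (\<forall>t\<ge>0. conn_graph T \<mu> M t \<subseteq>
       conn_graph T (Inf (weight_values lam phi (Max (range (\<lambda>l. norm (x 0 $ l))))) * \<mu>) Mt t)"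
proof -
  interpret weighted_consensus lam phi M x
  proof
    show "continuous_on UNIV (lam i)" for i
      using lam_lip lipschitz_on_continuous_on by blast
    show "continuous_on UNIV (\<lambda>(a, b). phi i j a b)" for i j
      using phi_lip lipschitz_on_continuous_on by blast
  qed (use lam_pos phi_pos M_meas M_range sol in \<open>auto intro: less_imp_le\<close>)
  show ?thesis
  proof (intro exI[of _ "rescaled_weight lam phi M x"] conjI allI impI)
    show "caratheodory_solution (lin_field (rescaled_weight lam phi M x)) x"
      by (rule caratheodory_solution_lin_field_rescaled_weight[OF sol])
    show "rescaled_weight lam phi M x i j absolutely_integrable_on {0..t}" if "0 \<le> t" for i j t
      using rescaled_weight_absolutely_integrable_on[OF order_refl that] .
    show "rescaled_weight lam phi M x i j t \<in> {0..Sup box_weights}" if "0 \<le> t" for i j t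
      using rescaled_weight_range[OF that] .
    show "conn_graph T \<mu> M t \<subseteq> conn_graph T (Inf box_weights * \<mu>) (rescaled_weight lam phi M x) t"
      if "0 \<le> t" for t
      using conn_graph_subset_rescaled_weight[OF T_pos that] .
  qed
qed

end
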